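(* Let $p\in(1,\infty)$ and $Z$ a countable discrete measure space, and fix a bijection $Z\cong\mathbb N$, giving the standard Schauder basis $\{e_i\}_{i\in\mathbb N}$ of $\ell^p(Z)$. Let $F_n$ be the coordinate projection onto the span of $e_1,\dots,e_n$. Then for every $K\in\mathcal K^*(\ell^p(Z))$ we have $\lim_{n\to\infty}F_nKF_n=K$ in $\mathcal K^*(\ell^p(Z))$, i.e. $\|F_nKF_n-K\|_{\max}\to0$.
   Context: An operator $T$ on $\ell^p(Z)$ is regarded as a matrix with respect to $\{e_i\}$ and $T^*$ denotes the transpose matrix. $T$ is a dual-operator if $T$ and $T^*$ are both bounded on $\ell^p(Z)$; its maximal norm is $\|T\|_{\max}=\max\{\|T\|,\|T^*\|\}$. $T$ is a compact dual-operator if $T$ and $T^*$ are both compact operators on $\ell^p(Z)$. $\mathcal K^*(\ell^p(Z))$ is the Banach space of compact dual-operators with the maximal norm. *)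

theory Defs
  imports "HOL-Analysis.Analysis"
begin

text \<open>Vectors of l^p(Z), with Z identified with nat via the fixed bijection
  (index i corresponds to basis vector e_(i+1)); complex scalars.\<close>

type_synonym vec = "nat \<Rightarrow> complex"
type_synonym mat = "nat \<Rightarrow> nat \<Rightarrow> complex"

definition in_lp :: "real \<Rightarrow> vec \<Rightarrow> bool" where
  "in_lp p x \<longleftrightarrow> summable (\<lambda>i. norm (x i) powr p)"

definition lp_norm :: "real \<Rightarrow> vec \<Rightarrow> real" where
  "lp_norm p x = (\<Sum>i. norm (x i) powr p) powr (1 / p)"

definition mat_apply :: "mat \<Rightarrow> vec \<Rightarrow> vec" where
  "mat_apply T x = (\<lambda>i. \<Sum>j. T i j * x j)"

definition bounded_op :: "real \<Rightarrow> mat \<Rightarrow> bool" where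
  "bounded_op p T \<longleftrightarrow>
     (\<forall>x. in_lp p x \<longrightarrow> (\<forall>i. summable (\<lambda>j. T i j * x j)) \<and> in_lp p (mat_apply T x)) \<and>
     (\<exists>C. \<forall>x. in_lp p x \<longrightarrow> lp_norm p (mat_apply T x) \<le> C * lp_norm p x)"

definition op_norm :: "real \<Rightarrow> mat \<Rightarrow> real" where
  "op_norm p T = Sup {lp_norm p (mat_apply T x) | x. in_lp p x \<and> lp_norm p x \<le> 1}"

definition compact_op :: "real \<Rightarrow> mat \<Rightarrow> bool" where
  "compact_op p T \<longleftrightarrow> bounded_op p T \<and>
     (\<forall>x :: nat \<Rightarrow> vec. (\<forall>n. in_lp p (x n) \<and> lp_norm p (x n) \<le> 1) \<longrightarrow>
        (\<exists>r y. strict_mono r \<and> in_lp p y \<and>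
           (\<lambda>n. lp_norm p (\<lambda>i. mat_apply T (x (r n)) i - y i)) \<longlonglongrightarrow> 0))"

definition transpose_mat :: "mat \<Rightarrow> mat" where
  "transpose_mat T = (\<lambda>i j. T j i)"

definition dual_op :: "real \<Rightarrow> mat \<Rightarrow> bool" where
  "dual_op p T \<longleftrightarrow> bounded_op p T \<and> bounded_op p (transpose_mat T)"

definition compact_dual_op :: "real \<Rightarrow> mat \<Rightarrow> bool" where
  "compact_dual_op p T \<longleftrightarrow> compact_op p T \<and> compact_op p (transpose_mat T)"

definition max_norm :: "real \<Rightarrow> mat \<Rightarrow> real" where
  "max_norm p T = max (op_norm p T) (op_norm p (transpose_mat T))"

text \<open>F_n: coordinate projection onto span{e_1,...,e_n} (indices 0..n-1).\<close>
definition proj_mat :: "nat \<Rightarrow> mat" where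
  "proj_mat n = (\<lambda>i j. if i = j \<and> i < n then 1 else 0)"

definition compress :: "nat \<Rightarrow> mat \<Rightarrow> mat" where
  "compress n K = (\<lambda>i j. if i < n \<and> j < n then K i j else 0)"

end

theory Submission
  imports Defs
begin

text \<open>Transposition maps \<open>F\<^sub>n K F\<^sub>n - K\<close> to \<open>F\<^sub>n K\<^sup>T F\<^sub>n - K\<^sup>T\<close>, so it suffices to show
  \<open>\<parallel>F\<^sub>n K F\<^sub>n - K\<parallel> \<longrightarrow> 0\<close> for every compact \<open>K\<close> on \<open>\<ell>\<^sup>p\<close>. Otherwise there are \<open>n\<^sub>k \<longrightarrow> \<infinity>\<close>
  and unit vectors \<open>x\<^sub>k\<close> with \<open>\<parallel>(F\<^sub>n\<^sub>k K F\<^sub>n\<^sub>k - K) x\<^sub>k\<parallel> > e\<close>. By compactness, along a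
  subsequence \<open>K x\<^sub>k \<longrightarrow> z\<close> and \<open>K F\<^sub>n\<^sub>k x\<^sub>k \<longrightarrow> y\<close> in \<open>\<ell>\<^sup>p\<close>. Every row of a bounded \<open>K\<close> lies in
  \<open>\<ell>\<^sup>q\<close>, \<open>q = p / (p - 1)\<close>, so by Young's inequality its pairing with the tails
  \<open>(I - F\<^sub>n\<^sub>k) x\<^sub>k\<close> tends to zero: \<open>K x\<^sub>k - K F\<^sub>n\<^sub>k x\<^sub>k \<longrightarrow> 0\<close> coordinatewise, whence \<open>y = z\<close>.
  But then \<open>F\<^sub>n\<^sub>k K F\<^sub>n\<^sub>k x\<^sub>k \<longrightarrow> y\<close> as well, a contradiction.\<close>

section \<open>The sequence space \<open>\<ell>\<^sup>p\<close>\<close>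

lemma lp_norm_nonneg: "0 \<le> lp_norm p x"
  by (simp add: lp_norm_def)

lemma lp_norm_powr:
  assumes "p > 0" "in_lp p x"
  shows "lp_norm p x powr p = (\<Sum>i. norm (x i) powr p)"
  using assms by (simp add: lp_norm_def powr_powr in_lp_def suminf_nonneg)

lemma lp_norm_le_iff:
  assumes "p > 0" "c \<ge> 0" "in_lp p x"
  shows "lp_norm p x \<le> c \<longleftrightarrow> (\<Sum>i. norm (x i) powr p) \<le> c powr p"
proof
  assume "lp_norm p x \<le> c"
  then show "(\<Sum>i. norm (x i) powr p) \<le> c powr p"
    using assms lp_norm_nonneg powr_mono2 by (metis less_eq_real_def lp_norm_powr)
next
  assume "(\<Sum>i. norm (x i) powr p) \<le> c powr p"
  then have "lp_norm p x \<le> (c powr p) powr (1 / p)"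
    unfolding lp_norm_def using assms by (intro powr_mono2) (auto simp: in_lp_def suminf_nonneg)
  then show "lp_norm p x \<le> c"
    using assms by (simp add: powr_powr)
qed

lemma lp_zero [simp]: "in_lp p (\<lambda>i. 0)" "lp_norm p (\<lambda>i. 0) = 0"
  by (auto simp: lp_norm_def in_lp_def)

lemma sums_tail_if:
  fixes f :: "nat \<Rightarrow> 'a::real_normed_vector"
  assumes "summable f"
  shows "(\<lambda>j. if j < N then 0 else f j) sums (\<Sum>k. f (k + N))"
proof -
  let ?g = "\<lambda>j. if j < N then 0 else f j"
  have "(\<lambda>k. ?g (k + N)) sums (\<Sum>k. f (k + N))"
    using assms by (simp add: summable_sums)
  then have "?g sums ((\<Sum>k. f (k + N)) + (\<Sum>j<N. ?g j))"
    by (rule sums_iff_shift [THEN iffD1])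
  then show ?thesis
    by simp
qed

lemma lp_dominated:
  assumes "p > 0" "in_lp p x" "\<And>i. norm (y i) \<le> norm (x i)"
  shows "in_lp p y" "lp_norm p y \<le> lp_norm p x"
proof -
  have le: "norm (y i) powr p \<le> norm (x i) powr p" for i
    using assms by (simp add: powr_mono2)
  show "in_lp p y"
    unfolding in_lp_def
    by (rule summable_comparison_test'[where N = 0, OF assms(2)[unfolded in_lp_def]]) (use le in auto)
  then have "(\<Sum>i. norm (y i) powr p) \<le> (\<Sum>i. norm (x i) powr p)"
    using assms(2) le unfolding in_lp_def by (intro suminf_le) auto
  then show "lp_norm p y \<le> lp_norm p x"
    using assms(1) \<open>in_lp p y\<close> unfolding lp_norm_def in_lp_def
    by (intro powr_mono2) (auto intro: suminf_nonneg)
qed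

lemma norm_le_lp_norm:
  assumes "p > 0" "in_lp p x"
  shows "norm (x i) \<le> lp_norm p x"
proof -
  have "norm (x i) powr p \<le> (\<Sum>j. norm (x j) powr p)"
    using assms sum_le_suminf[of "\<lambda>j. norm (x j) powr p" "{i}"] by (auto simp: in_lp_def)
  then have "(norm (x i) powr p) powr (1 / p) \<le> lp_norm p x"
    unfolding lp_norm_def using assms(1) by (intro powr_mono2) auto
  then show ?thesis
    using assms(1) by (simp add: powr_powr)
qed

lemma lp_norm_eq_0D:
  assumes "p > 0" "in_lp p x" "lp_norm p x = 0"
  shows "x = (\<lambda>i. 0)"
  using norm_le_lp_norm[OF assms(1,2)] assms(3) by (auto intro: antisym)

lemma convex_on_powr_nonneg:
  assumes "p \<ge> 1"
  shows "convex_on {0..} (\<lambda>x::real. x powr p)"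
proof (rule convex_on_linorderI)
  fix t x y :: real
  assume t: "0 < t" "t < 1" and xy: "x \<in> {0..}" "y \<in> {0..}" "x < y"
  show "((1 - t) *\<^sub>R x + t *\<^sub>R y) powr p \<le> (1 - t) * x powr p + t * y powr p"
  proof (cases "x = 0")
    case True
    have "(t * y) powr p = t powr p * y powr p"
      using t xy by (simp add: powr_mult)
    also have "\<dots> \<le> t * y powr p"
      using powr_mono'[of 1 p t] assms t by (intro mult_right_mono) auto
    finally show ?thesis
      using True by simp
  next
    case False
    then show ?thesis
      using convex_onD[OF powr_convex[OF assms], of t x y] t xy by auto
  qed
qed simp

lemma powr_add_div_le:
  fixes a b A B p :: real
  assumes p: "p \<ge> 1" and ab: "a \<ge> 0" "b \<ge> 0" and AB: "A > 0" "B > 0"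
  shows "((a + b) / (A + B)) powr p \<le> A / (A + B) * (a / A) powr p + B / (A + B) * (b / B) powr p"
proof -
  have t: "0 \<le> B / (A + B)" "B / (A + B) \<le> 1" "1 - B / (A + B) = A / (A + B)"
    using AB by (auto simp: field_simps)
  have "(a + b) / (A + B) = A / (A + B) * (a / A) + B / (A + B) * (b / B)"
    using AB by (simp add: add_divide_distrib)
  then show ?thesis
    using convex_onD[OF convex_on_powr_nonneg[OF p], of "B / (A + B)" "a / A" "b / B"] t ab AB
    by (simp only: t(3) real_scaleR_def) simp
qed

lemma lp_norm_le_if_normalised:
  assumes p: "p > 0" and c: "c > 0"
    and summ: "summable (\<lambda>i. (norm (z i) / c) powr p)" and le: "(\<Sum>i. (norm (z i) / c) powr p) \<le> 1"
  shows "in_lp p z" "lp_norm p z \<le> c"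
proof -
  have cp: "c powr p > 0"
    using c by simp
  have eq: "(\<lambda>i. (norm (z i) / c) powr p) = (\<lambda>i. norm (z i) powr p / c powr p)"
    by (simp add: powr_divide)
  show z: "in_lp p z"
    using summable_mult[OF summ, of "c powr p"] cp by (simp add: eq in_lp_def)
  have "(\<Sum>i. norm (z i) powr p) / c powr p \<le> 1"
    using le z by (simp add: eq suminf_divide in_lp_def)
  then show "lp_norm p z \<le> c"
    using lp_norm_le_iff[OF p less_imp_le[OF c] z] cp by simp
qed

lemma lp_minkowski:
  assumes p: "p \<ge> 1" and x: "in_lp p x" and y: "in_lp p y"
  shows "in_lp p (\<lambda>i. x i + y i)" "lp_norm p (\<lambda>i. x i + y i) \<le> lp_norm p x + lp_norm p y"
proof -
  define A where "A = lp_norm p x"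
  define B where "B = lp_norm p y"
  have p0: "p > 0"
    using p by simp
  have "in_lp p (\<lambda>i. x i + y i) \<and> lp_norm p (\<lambda>i. x i + y i) \<le> A + B"
  proof (cases "A = 0 \<or> B = 0")
    case True
    then show ?thesis
      using lp_norm_eq_0D[OF p0 x] lp_norm_eq_0D[OF p0 y] x y by (auto simp: A_def B_def)
  next
    case False
    then have A: "A > 0" and B: "B > 0"
      using lp_norm_nonneg by (auto simp: A_def B_def less_le)
    define g where
      "g i = A / (A + B) * (norm (x i) / A) powr p + B / (A + B) * (norm (y i) / B) powr p" for i
    have le: "(norm (x i + y i) / (A + B)) powr p \<le> g i" for i
    proof -
      have "(norm (x i + y i) / (A + B)) powr p \<le> ((norm (x i) + norm (y i)) / (A + B)) powr p"
        using p0 A B norm_triangle_ineq[of "x i" "y i"] by (intro powr_mono2 divide_right_mono) auto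
      also have "\<dots> \<le> g i"
        unfolding g_def using powr_add_div_le[OF p _ _ A B] by simp
      finally show ?thesis .
    qed
    have "g sums (A / (A + B) * (A powr p / A powr p) + B / (A + B) * (B powr p / B powr p))"
      unfolding g_def powr_divide
      using x y lp_norm_powr[OF p0 x] lp_norm_powr[OF p0 y] unfolding in_lp_def A_def B_def
      by (intro sums_add sums_mult sums_divide) (auto simp: summable_sums)
    then have g: "g sums 1"
      using A B by (simp add: add_divide_distrib[symmetric])
    have summ: "summable (\<lambda>i. (norm (x i + y i) / (A + B)) powr p)"
      by (rule summable_comparison_test'[where N = 0, OF sums_summable[OF g]]) (use le in auto)
    moreover have "(\<Sum>i. (norm (x i + y i) / (A + B)) powr p) \<le> 1"
      using suminf_le[OF le summ sums_summable[OF g]] sums_unique[OF g] by simp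
    ultimately show ?thesis
      using lp_norm_le_if_normalised[OF p0, of "A + B"] A B by simp
  qed
  then show "in_lp p (\<lambda>i. x i + y i)" "lp_norm p (\<lambda>i. x i + y i) \<le> lp_norm p x + lp_norm p y"
    by (auto simp: A_def B_def)
qed

lemma lp_uminus [simp]: "in_lp p (\<lambda>i. - x i) = in_lp p x" "lp_norm p (\<lambda>i. - x i) = lp_norm p x"
  by (auto simp: in_lp_def lp_norm_def)

lemma in_lp_diff:
  assumes "p \<ge> 1" "in_lp p x" "in_lp p y"
  shows "in_lp p (\<lambda>i. x i - y i)"
  using lp_minkowski(1)[OF assms(1,2), of "\<lambda>i. - y i"] assms(3) by simp

lemma lp_norm_minus_commute: "lp_norm p (\<lambda>i. x i - y i) = lp_norm p (\<lambda>i. y i - x i)"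
  by (simp add: lp_norm_def norm_minus_commute)

lemma lp_norm_triangle:
  assumes "p \<ge> 1" "in_lp p a" "in_lp p b" "in_lp p c"
  shows "lp_norm p (\<lambda>i. a i - c i) \<le> lp_norm p (\<lambda>i. a i - b i) + lp_norm p (\<lambda>i. b i - c i)"
  using lp_minkowski(2)[OF assms(1) in_lp_diff[OF assms(1,2,3)] in_lp_diff[OF assms(1,3,4)]] by simp

definition trunc :: "nat \<Rightarrow> vec \<Rightarrow> vec" where
  "trunc n x = (\<lambda>i. if i < n then x i else 0)"

lemma in_lp_trunc: "p > 0 \<Longrightarrow> in_lp p x \<Longrightarrow> in_lp p (trunc n x)"
  by (rule lp_dominated(1)) (auto simp: trunc_def)

lemma lp_norm_trunc_le: "p > 0 \<Longrightarrow> in_lp p x \<Longrightarrow> lp_norm p (trunc n x) \<le> lp_norm p x"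
  by (rule lp_dominated(2)) (auto simp: trunc_def)

lemma lp_norm_trunc_minus_tendsto_0:
  assumes "p > 0" "in_lp p y"
  shows "(\<lambda>n. lp_norm p (\<lambda>i. trunc n y i - y i)) \<longlonglongrightarrow> 0"
proof -
  have y: "summable (\<lambda>i. norm (y i) powr p)"
    using assms(2) by (simp add: in_lp_def)
  have "(\<lambda>i. norm (trunc n y i - y i) powr p) = (\<lambda>i. if i < n then 0 else norm (y i) powr p)" for n
    using assms(1) by (auto simp: trunc_def)
  then have eq: "lp_norm p (\<lambda>i. trunc n y i - y i) = (\<Sum>k. norm (y (k + n)) powr p) powr (1 / p)" for n
    using sums_unique[OF sums_tail_if[OF y, of n]] by (simp add: lp_norm_def)
  have "(\<lambda>n. (\<Sum>k. norm (y (k + n)) powr p) powr (1 / p)) \<longlonglongrightarrow> 0"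
    using assms(1) y summable_iff_shift[of "\<lambda>i. norm (y i) powr p"]
    by (intro tendsto_zero_powrI[where b = "1 / p"] suminf_exist_split2 always_eventually allI
        suminf_nonneg) auto
  then show ?thesis
    unfolding eq .
qed

abbreviation lp_tendsto :: "real \<Rightarrow> (nat \<Rightarrow> vec) \<Rightarrow> vec \<Rightarrow> bool" where
  "lp_tendsto p a y \<equiv> (\<lambda>k. lp_norm p (\<lambda>i. a k i - y i)) \<longlonglongrightarrow> 0"

lemma lp_tendsto_coord:
  assumes "p > 0" "\<And>k. in_lp p (\<lambda>i. a k i - y i)" "lp_tendsto p a y"
  shows "(\<lambda>k. a k i) \<longlonglongrightarrow> y i"
proof -
  have "(\<lambda>k. a k i - y i) \<longlonglongrightarrow> 0"
    using norm_le_lp_norm[OF assms(1,2)]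
    by (intro Lim_null_comparison[OF always_eventually assms(3)]) blast
  then show ?thesis
    by (simp add: LIM_zero_iff)
qed

lemma lp_tendsto_unique_coordwise:
  assumes p: "p \<ge> 1" and a: "\<And>k. in_lp p (a k)" and b: "\<And>k. in_lp p (b k)"
    and y: "in_lp p y" and z: "in_lp p z" and lim: "lp_tendsto p a y" "lp_tendsto p b z"
    and close: "\<And>i. (\<lambda>k. a k i - b k i) \<longlonglongrightarrow> 0"
  shows "y = z"
proof
  fix i
  have "(\<lambda>k. a k i) \<longlonglongrightarrow> y i" "(\<lambda>k. b k i) \<longlonglongrightarrow> z i"
    using p lim by (intro lp_tendsto_coord in_lp_diff a b y z; simp)+
  then have "(\<lambda>k. a k i - b k i) \<longlonglongrightarrow> y i - z i"
    by (rule tendsto_diff)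
  with close have "y i - z i = 0"
    using LIMSEQ_unique by blast
  then show "y i = z i"
    by simp
qed

lemma lp_tendsto_trunc:
  assumes p: "p \<ge> 1" and n: "filterlim n at_top sequentially"
    and a: "\<And>k. in_lp p (a k)" and y: "in_lp p y" and lim: "lp_tendsto p a y"
  shows "lp_tendsto p (\<lambda>k. trunc (n k) (a k)) y"
proof (rule Lim_null_comparison[OF always_eventually])
  have p0: "p > 0"
    using p by simp
  show "\<forall>k. norm (lp_norm p (\<lambda>i. trunc (n k) (a k) i - y i))
      \<le> lp_norm p (\<lambda>i. a k i - y i) + lp_norm p (\<lambda>i. trunc (n k) y i - y i)"
  proof
    fix k
    have "lp_norm p (\<lambda>i. trunc (n k) (a k) i - y i)
        \<le> lp_norm p (\<lambda>i. trunc (n k) (a k) i - trunc (n k) y i) + lp_norm p (\<lambda>i. trunc (n k) y i - y i)"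
      using p a y in_lp_trunc[OF p0] by (intro lp_norm_triangle) auto
    also have "lp_norm p (\<lambda>i. trunc (n k) (a k) i - trunc (n k) y i) \<le> lp_norm p (\<lambda>i. a k i - y i)"
      using p0 in_lp_diff[OF p a y] by (intro lp_dominated(2)) (auto simp: trunc_def)
    finally show "norm (lp_norm p (\<lambda>i. trunc (n k) (a k) i - y i))
        \<le> lp_norm p (\<lambda>i. a k i - y i) + lp_norm p (\<lambda>i. trunc (n k) y i - y i)"
      using lp_norm_nonneg by simp
  qed
  show "(\<lambda>k. lp_norm p (\<lambda>i. a k i - y i) + lp_norm p (\<lambda>i. trunc (n k) y i - y i)) \<longlonglongrightarrow> 0"
    using tendsto_add[OF lim filterlim_compose[OF lp_norm_trunc_minus_tendsto_0[OF p0 y] n]]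
    by simp
qed

lemma lp_tendsto_same_limit:
  assumes p: "p \<ge> 1" and "\<And>k. in_lp p (a k)" "\<And>k. in_lp p (b k)" "in_lp p y"
    and "lp_tendsto p a y" "lp_tendsto p b y"
  shows "(\<lambda>k. lp_norm p (\<lambda>i. a k i - b k i)) \<longlonglongrightarrow> 0"
proof (rule Lim_null_comparison[OF always_eventually])
  show "\<forall>k. norm (lp_norm p (\<lambda>i. a k i - b k i))
      \<le> lp_norm p (\<lambda>i. a k i - y i) + lp_norm p (\<lambda>i. b k i - y i)"
  proof
    fix k
    show "norm (lp_norm p (\<lambda>i. a k i - b k i))
        \<le> lp_norm p (\<lambda>i. a k i - y i) + lp_norm p (\<lambda>i. b k i - y i)"
      using lp_norm_triangle[OF p assms(2) assms(4) assms(3), of k k]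
        lp_norm_minus_commute[of p y "b k"] lp_norm_nonneg[of p "\<lambda>i. a k i - b k i"]
      by simp
  qed
  show "(\<lambda>k. lp_norm p (\<lambda>i. a k i - y i) + lp_norm p (\<lambda>i. b k i - y i)) \<longlonglongrightarrow> 0"
    using tendsto_add[OF assms(5,6)] by simp
qed

section \<open>Matrices acting on \<open>\<ell>\<^sup>p\<close>\<close>

lemma mat_apply_diff:
  assumes "bounded_op p K" "in_lp p x" "in_lp p y"
  shows "mat_apply K x i - mat_apply K y i = (\<Sum>j. K i j * (x j - y j))"
  using assms suminf_diff[of "\<lambda>j. K i j * x j" "\<lambda>j. K i j * y j"]
  by (simp add: bounded_op_def mat_apply_def algebra_simps)

lemma mat_apply_compress_minus:
  assumes "bounded_op p K" "in_lp p x"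
  shows "mat_apply (\<lambda>i j. compress n K i j - K i j) x
    = (\<lambda>i. trunc n (mat_apply K (trunc n x)) i - mat_apply K x i)"
proof
  fix i
  have "(\<lambda>j. compress n K i j * x j) = (\<lambda>j. if i < n then K i j * trunc n x j else 0)"
    by (auto simp: compress_def trunc_def)
  then have compressed: "(\<Sum>j. compress n K i j * x j) = trunc n (mat_apply K (trunc n x)) i"
    by (simp add: trunc_def mat_apply_def)
  have "summable (\<lambda>j. compress n K i j * x j)"
    by (rule summable_finite[of "{..<n}"]) (auto simp: compress_def)
  then show "mat_apply (\<lambda>i j. compress n K i j - K i j) x i
      = trunc n (mat_apply K (trunc n x)) i - mat_apply K x i"
    using assms suminf_diff[of "\<lambda>j. compress n K i j * x j" "\<lambda>j. K i j * x j"] compressed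
    by (simp add: bounded_op_def mat_apply_def algebra_simps)
qed

lemma summable_pairing_Young:
  fixes k w :: vec
  assumes pq: "p > 1" "q > 1" "1 / p + 1 / q = 1" and s: "s > 0"
    and k: "summable (\<lambda>j. norm (k j) powr q)" and w: "in_lp p w"
  shows "summable (\<lambda>j. norm (k j * w j))"
    "(\<Sum>j. norm (k j * w j))
      \<le> s powr p / p * (\<Sum>j. norm (w j) powr p) + (\<Sum>j. norm (k j) powr q) / (q * s powr q)"
proof -
  define h where "h j = s powr p / p * norm (w j) powr p + norm (k j) powr q / (q * s powr q)" for j
  have bound: "norm (k j * w j) \<le> h j" for j
  proof -
    have "norm (k j * w j) = (s * norm (w j)) * (norm (k j) / s)"
      using s by (simp add: norm_mult)
    also have "\<dots> \<le> (s * norm (w j)) powr p / p + (norm (k j) / s) powr q / q"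
      using Youngs_inequality[OF pq, of "s * norm (w j)" "norm (k j) / s"] s by simp
    also have "\<dots> = h j"
      using s by (simp add: h_def powr_mult powr_divide)
    finally show ?thesis .
  qed
  have h: "h sums (s powr p / p * (\<Sum>j. norm (w j) powr p) + (\<Sum>j. norm (k j) powr q) / (q * s powr q))"
    unfolding h_def using w k
    by (intro sums_add sums_mult sums_divide) (auto simp: in_lp_def summable_sums)
  show "summable (\<lambda>j. norm (k j * w j))"
    by (rule summable_comparison_test'[where N = 0, OF sums_summable[OF h]]) (use bound in auto)
  then show "(\<Sum>j. norm (k j * w j))
      \<le> s powr p / p * (\<Sum>j. norm (w j) powr p) + (\<Sum>j. norm (k j) powr q) / (q * s powr q)"
    using suminf_le[OF bound _ sums_summable[OF h]] sums_unique[OF h] by simp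
qed

text \<open>Young's inequality with the scaling \<open>s powr p / p = e / 2\<close> bounds the pairing by \<open>e / 2\<close>
  plus a multiple of the \<open>\<ell>\<^sup>q\<close> tail of the row.\<close>
lemma lq_pairing_tail_small:
  fixes k :: vec
  assumes pq: "p > 1" "q > 1" "1 / p + 1 / q = 1"
    and k: "summable (\<lambda>j. norm (k j) powr q)" and e: "e > 0"
  shows "\<exists>N. \<forall>w. in_lp p w \<and> lp_norm p w \<le> 1 \<and> (\<forall>j<N. w j = 0) \<longrightarrow> norm (\<Sum>j. k j * w j) \<le> e"
proof -
  define s where "s = (e * p / 2) powr (1 / p)"
  have s: "s > 0" "s powr p / p = e / 2"
    using e pq by (auto simp: s_def powr_powr)
  obtain N where N: "norm (\<Sum>j. norm (k (j + N)) powr q) < e / 2 * (q * s powr q)"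
    using suminf_exist_split[OF _ k, of "e / 2 * (q * s powr q)"] e s pq by auto
  show ?thesis
  proof (intro exI allI impI, elim conjE)
    fix w
    assume w: "in_lp p w" "lp_norm p w \<le> 1" "\<forall>j<N. w j = 0"
    define kN where "kN j = (if j < N then 0 else k j)" for j
    have "(\<lambda>j. norm (kN j) powr q) = (\<lambda>j. if j < N then 0 else norm (k j) powr q)"
      by (auto simp: kN_def)
    then have kN: "(\<lambda>j. norm (kN j) powr q) sums (\<Sum>j. norm (k (j + N)) powr q)"
      using sums_tail_if[OF k, of N] by simp
    have pairing: "(\<lambda>j. k j * w j) = (\<lambda>j. kN j * w j)"
      using w(3) by (auto simp: kN_def)
    have "(\<Sum>j. norm (w j) powr p) \<le> 1"
      using lp_norm_le_iff[of p 1 w] pq w by simp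
    then have "s powr p / p * (\<Sum>j. norm (w j) powr p) \<le> s powr p / p * 1"
      using pq by (intro mult_left_mono) auto
    also have "s powr p / p * 1 = e / 2"
      using s(2) by simp
    finally have "s powr p / p * (\<Sum>j. norm (w j) powr p) \<le> e / 2" .
    moreover have "(\<Sum>j. norm (k (j + N)) powr q) / (q * s powr q) \<le> e / 2"
      using N s pq by (simp add: divide_le_eq)
    moreover have "(\<Sum>j. norm (kN j * w j))
        \<le> s powr p / p * (\<Sum>j. norm (w j) powr p) + (\<Sum>j. norm (k (j + N)) powr q) / (q * s powr q)"
      using summable_pairing_Young(2)[OF pq s(1) sums_summable[OF kN] w(1)]
      unfolding sums_unique[OF kN, symmetric] .
    ultimately have "(\<Sum>j. norm (kN j * w j)) \<le> e"
      by linarith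
    then show "norm (\<Sum>j. k j * w j) \<le> e"
      unfolding pairing
      using summable_norm[OF summable_pairing_Young(1)[OF pq s(1) sums_summable[OF kN] w(1)]]
      by simp
  qed
qed

text \<open>The witness \<open>x j = cnj (K i j) * \<bar>K i j\<bar> powr (q - 2)\<close> for \<open>j < M\<close> is the one giving
  equality in Hoelder's inequality.\<close>
lemma row_norming_vector:
  fixes K :: mat and i M :: nat
  assumes p: "p > 1"
  defines "q \<equiv> p / (p - 1)"
  defines "S \<equiv> \<Sum>j<M. norm (K i j) powr q"
  obtains x where "in_lp p x" "lp_norm p x = S powr (1 / p)" "mat_apply K x i = of_real S"
proof
  define x where "x j = (if j < M then cnj (K i j) * of_real (norm (K i j) powr (q - 2)) else 0)" for j
  have q: "q > 1" "(q - 1) * p = q"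
    using p by (auto simp: q_def field_simps)
  have norm_x: "norm (x j) powr p = (if j < M then norm (K i j) powr q else 0)" for j
  proof (cases "K i j = 0")
    case False
    then have "norm (cnj (K i j)) * norm (K i j) powr (q - 2) = norm (K i j) powr (q - 1)"
      using powr_add[of "norm (K i j)" 1 "q - 2"] by simp
    then show ?thesis
      using q p by (simp add: x_def norm_mult powr_powr)
  qed (use p in \<open>simp add: x_def\<close>)
  have pairing: "K i j * x j = of_real (if j < M then norm (K i j) powr q else 0)" for j
  proof (cases "K i j = 0")
    case False
    have "K i j * cnj (K i j) * of_real (norm (K i j) powr (q - 2))
        = of_real (norm (K i j) powr 2 * norm (K i j) powr (q - 2))"
      by (simp add: complex_norm_square[symmetric] powr_numeral)
    also have "\<dots> = of_real (norm (K i j) powr q)"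
      using False powr_add[of "norm (K i j)" 2 "q - 2"] by simp
    finally show ?thesis
      by (simp add: x_def mult.assoc)
  qed (simp add: x_def)
  show "in_lp p x"
    unfolding in_lp_def by (rule summable_finite[of "{..<M}"]) (use norm_x in auto)
  show "lp_norm p x = S powr (1 / p)"
    unfolding lp_norm_def S_def using norm_x by (subst suminf_finite[of "{..<M}"]) auto
  show "mat_apply K x i = of_real S"
    unfolding mat_apply_def S_def using pairing by (subst suminf_finite[of "{..<M}"]) auto
qed

lemma bounded_op_row_summable:
  assumes p: "p > 1" and K: "bounded_op p K"
  shows "summable (\<lambda>j. norm (K i j) powr (p / (p - 1)))"
proof -
  define q where "q = p / (p - 1)"
  have q: "q > 1" "1 / p + 1 / q = 1"
    using p by (auto simp: q_def field_simps)
  obtain C where C: "\<And>x. in_lp p x \<Longrightarrow> lp_norm p (mat_apply K x) \<le> C * lp_norm p x"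
    using K unfolding bounded_op_def by blast
  have "(\<Sum>j<M. norm (K i j) powr q) \<le> \<bar>C\<bar> powr q" for M
  proof -
    define S where "S = (\<Sum>j<M. norm (K i j) powr q)"
    obtain x where x: "in_lp p x" "lp_norm p x = S powr (1 / p)" "mat_apply K x i = of_real S"
      using row_norming_vector[OF p, of K i M] unfolding S_def q_def by blast
    have "S \<ge> 0"
      unfolding S_def by (intro sum_nonneg) auto
    have "S \<le> C * S powr (1 / p)"
    proof -
      have "S = norm (mat_apply K x i)"
        using x(3) \<open>S \<ge> 0\<close> by simp
      also have "\<dots> \<le> lp_norm p (mat_apply K x)"
        using norm_le_lp_norm K x(1) p by (simp add: bounded_op_def)
      also have "\<dots> \<le> C * S powr (1 / p)"
        using C[OF x(1)] x(2) by simp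
      finally show ?thesis .
    qed
    have "S powr (1 / q) \<le> \<bar>C\<bar>"
    proof (cases "S = 0")
      case False
      then have "S powr (1 / p) > 0"
        using \<open>S \<ge> 0\<close> by simp
      moreover have "S powr (1 / p) * S powr (1 / q) \<le> S powr (1 / p) * C"
        using \<open>S \<le> C * S powr (1 / p)\<close> q powr_add[of S "1 / p" "1 / q"] \<open>S \<ge> 0\<close>
        by (simp add: mult.commute)
      ultimately show ?thesis
        by (simp add: mult_le_cancel_left_pos)
    qed simp
    then have "(S powr (1 / q)) powr q \<le> \<bar>C\<bar> powr q"
      using q by (intro powr_mono2) auto
    then show ?thesis
      using q \<open>S \<ge> 0\<close> by (simp add: S_def powr_powr)
  qed
  then show ?thesis
    unfolding q_def[symmetric] by (intro summableI_nonneg_bounded) auto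
qed

section \<open>Compressions of compact matrices\<close>

lemma compact_opE:
  fixes v :: "nat \<Rightarrow> vec"
  assumes "compact_op p K" "\<And>k. in_lp p (v k)" "\<And>k. lp_norm p (v k) \<le> 1"
  obtains r y where "strict_mono r" "in_lp p y" "lp_tendsto p (\<lambda>k. mat_apply K (v (r k))) y"
proof -
  have "\<forall>x :: nat \<Rightarrow> vec. (\<forall>n. in_lp p (x n) \<and> lp_norm p (x n) \<le> 1) \<longrightarrow>
      (\<exists>r y. strict_mono r \<and> in_lp p y \<and> lp_tendsto p (\<lambda>n. mat_apply K (x (r n))) y)"
    using assms(1) by (simp add: compact_op_def)
  from this[rule_format, of v, OF conjI[OF assms(2,3)]] show ?thesis
    using that by blast
qed

lemma mat_apply_tail_tendsto_0:
  assumes p: "p > 1" and K: "bounded_op p K" and n: "filterlim n at_top sequentially"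
    and x: "\<And>k. in_lp p (x k)" "\<And>k. lp_norm p (x k) \<le> 1"
  shows "(\<lambda>k. mat_apply K (x k) i - mat_apply K (trunc (n k) (x k)) i) \<longlonglongrightarrow> 0"
proof (rule tendstoI)
  fix e :: real
  assume "e > 0"
  have q: "p / (p - 1) > 1" "1 / p + 1 / (p / (p - 1)) = 1"
    using p by (auto simp: field_simps)
  obtain N where N: "\<And>w. in_lp p w \<Longrightarrow> lp_norm p w \<le> 1 \<Longrightarrow> \<forall>j<N. w j = 0 \<Longrightarrow>
      norm (\<Sum>j. K i j * w j) \<le> e / 2"
    using lq_pairing_tail_small[OF p q bounded_op_row_summable[OF p K, of i], of "e / 2"] \<open>e > 0\<close>
    by auto
  have "\<forall>\<^sub>F k in sequentially. n k \<ge> N"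
    using n by (simp add: filterlim_at_top)
  then show "\<forall>\<^sub>F k in sequentially.
      dist (mat_apply K (x k) i - mat_apply K (trunc (n k) (x k)) i) 0 < e"
  proof eventually_elim
    case (elim k)
    define w where "w j = x k j - trunc (n k) (x k) j" for j
    have "in_lp p w" "lp_norm p w \<le> lp_norm p (x k)"
      using lp_dominated[of p "x k" w] x(1) p by (auto simp: w_def trunc_def)
    moreover note order_trans[OF this(2) x(2)]
    moreover have "\<forall>j<N. w j = 0"
      using elim by (auto simp: w_def trunc_def)
    moreover have "mat_apply K (x k) i - mat_apply K (trunc (n k) (x k)) i = (\<Sum>j. K i j * w j)"
      using mat_apply_diff[OF K x(1) in_lp_trunc[OF _ x(1)]] p by (simp add: w_def)
    ultimately show ?case
      using N[of w] \<open>e > 0\<close> by (simp add: dist_norm)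
  qed
qed

lemma compress_minus_tendsto_0_along_subseq:
  assumes p: "p > 1" and K: "compact_op p K" and n: "filterlim n at_top sequentially"
    and x: "\<And>k. in_lp p (x k)" "\<And>k. lp_norm p (x k) \<le> 1"
  obtains r where "strict_mono r"
    "(\<lambda>k. lp_norm p (mat_apply (\<lambda>i j. compress (n (r k)) K i j - K i j) (x (r k)))) \<longlonglongrightarrow> 0"
proof -
  have p0: "p > 0" and p1: "p \<ge> 1"
    using p by auto
  have Kb: "bounded_op p K"
    using K by (simp add: compact_op_def)
  define u where "u k = trunc (n k) (x k)" for k
  have u: "in_lp p (u k)" "lp_norm p (u k) \<le> 1" for k
    unfolding u_def using in_lp_trunc[OF p0 x(1)] order_trans[OF lp_norm_trunc_le[OF p0 x(1)] x(2)]
    by auto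
  obtain r1 y where r1: "strict_mono r1" and y: "in_lp p y"
    and Ku: "lp_tendsto p (\<lambda>k. mat_apply K (u (r1 k))) y"
    by (rule compact_opE[OF K u])
  obtain r2 z where r2: "strict_mono r2" and z: "in_lp p z"
    and Kx: "lp_tendsto p (\<lambda>k. mat_apply K (x (r1 (r2 k)))) z"
    by (rule compact_opE[OF K, of "\<lambda>k. x (r1 k)", OF x(1) x(2)])
  define r where "r = r1 \<circ> r2"
  have r: "strict_mono r"
    unfolding r_def using r1 r2 by (rule strict_mono_o)
  have Ku': "lp_tendsto p (\<lambda>k. mat_apply K (u (r k))) y"
    using LIMSEQ_subseq_LIMSEQ[OF Ku r2] by (simp add: r_def o_def)
  have Kx': "lp_tendsto p (\<lambda>k. mat_apply K (x (r k))) z"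
    using Kx by (simp add: r_def)
  have nr: "filterlim (\<lambda>k. n (r k)) at_top sequentially"
    using filterlim_compose[OF n filterlim_subseq[OF r]] .
  have Ku_in: "in_lp p (mat_apply K (u k))" and Kx_in: "in_lp p (mat_apply K (x k))" for k
    using Kb u(1) x(1) by (simp_all add: bounded_op_def)
  have "z = y"
    using lp_tendsto_unique_coordwise[OF p1 Kx_in Ku_in z y Kx' Ku'] mat_apply_tail_tendsto_0[OF p Kb nr x]
    by (simp add: u_def)
  have "lp_tendsto p (\<lambda>k. trunc (n (r k)) (mat_apply K (u (r k)))) y"
    by (rule lp_tendsto_trunc[OF p1 nr Ku_in y Ku'])
  moreover have "lp_tendsto p (\<lambda>k. mat_apply K (x (r k))) y"
    using Kx' \<open>z = y\<close> by simp
  ultimately have lim: "(\<lambda>k. lp_norm p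
      (\<lambda>i. trunc (n (r k)) (mat_apply K (u (r k))) i - mat_apply K (x (r k)) i)) \<longlonglongrightarrow> 0"
    by (rule lp_tendsto_same_limit[OF p1, of "\<lambda>k. trunc (n (r k)) (mat_apply K (u (r k)))"
          "\<lambda>k. mat_apply K (x (r k))" y, OF in_lp_trunc[OF p0 Ku_in] Kx_in y])
  have "mat_apply (\<lambda>i j. compress (n (r k)) K i j - K i j) (x (r k))
      = (\<lambda>i. trunc (n (r k)) (mat_apply K (u (r k))) i - mat_apply K (x (r k)) i)" for k
    unfolding u_def by (rule mat_apply_compress_minus[OF Kb x(1)])
  then show ?thesis
    using lim by (intro that[OF r]) (simp only:)
qed

lemma compress_minus_eventually_small:
  assumes p: "p > 1" and K: "compact_op p K" and e: "e > 0"
  shows "\<exists>N. \<forall>n\<ge>N. \<forall>x. in_lp p x \<and> lp_norm p x \<le> 1 \<longrightarrow>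
    lp_norm p (mat_apply (\<lambda>i j. compress n K i j - K i j) x) \<le> e"
proof (rule ccontr)
  assume "\<not> ?thesis"
  then have "\<forall>N. \<exists>n x. n \<ge> N \<and> in_lp p x \<and> lp_norm p x \<le> 1 \<and>
      lp_norm p (mat_apply (\<lambda>i j. compress n K i j - K i j) x) > e"
    by (simp add: not_le)
  from choice[OF this] obtain n where "\<forall>N. \<exists>x. n N \<ge> N \<and> in_lp p x \<and> lp_norm p x \<le> 1 \<and>
      lp_norm p (mat_apply (\<lambda>i j. compress (n N) K i j - K i j) x) > e"
    by blast
  then have n: "\<And>N. n N \<ge> N" and "\<forall>N. \<exists>x. in_lp p x \<and> lp_norm p x \<le> 1 \<and>
      lp_norm p (mat_apply (\<lambda>i j. compress (n N) K i j - K i j) x) > e"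
    by blast+
  from choice[OF this(2)] obtain x where x: "\<And>N. in_lp p (x N)" "\<And>N. lp_norm p (x N) \<le> 1"
    and large: "\<And>N. lp_norm p (mat_apply (\<lambda>i j. compress (n N) K i j - K i j) (x N)) > e"
    by blast
  have "filterlim n at_top sequentially"
    using n by (intro filterlim_at_top_mono[OF filterlim_ident]) auto
  then obtain r where "strict_mono r" and lim:
    "(\<lambda>k. lp_norm p (mat_apply (\<lambda>i j. compress (n (r k)) K i j - K i j) (x (r k)))) \<longlonglongrightarrow> 0"
    by (rule compress_minus_tendsto_0_along_subseq[OF p K _ x])
  have "\<forall>\<^sub>F k in sequentially.
      lp_norm p (mat_apply (\<lambda>i j. compress (n (r k)) K i j - K i j) (x (r k))) < e"
    using lim e by (rule order_tendstoD(2))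
  then obtain k where "lp_norm p (mat_apply (\<lambda>i j. compress (n (r k)) K i j - K i j) (x (r k))) < e"
    by (auto simp: eventually_sequentially)
  then show False
    using large[of "r k"] by simp
qed

lemma op_norm_le:
  assumes "\<And>x. in_lp p x \<Longrightarrow> lp_norm p x \<le> 1 \<Longrightarrow> lp_norm p (mat_apply T x) \<le> e"
  shows "0 \<le> op_norm p T" "op_norm p T \<le> e"
proof -
  let ?S = "{lp_norm p (mat_apply T x) | x. in_lp p x \<and> lp_norm p x \<le> 1}"
  have "mat_apply T (\<lambda>i. 0) = (\<lambda>i. 0)"
    by (simp add: mat_apply_def)
  then have "0 \<in> ?S"
    by (intro CollectI exI[of _ "\<lambda>i. 0"]) simp
  moreover have "bdd_above ?S"
    using assms by (auto intro: bdd_aboveI[of _ e])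
  ultimately show "0 \<le> op_norm p T"
    unfolding op_norm_def by (rule cSup_upper)
  show "op_norm p T \<le> e"
    unfolding op_norm_def using \<open>0 \<in> ?S\<close> assms by (intro cSup_least) auto
qed

lemma op_norm_compress_minus_tendsto_0:
  assumes p: "p > 1" and K: "compact_op p K"
  shows "(\<lambda>n. op_norm p (\<lambda>i j. compress n K i j - K i j)) \<longlonglongrightarrow> 0"
proof (rule LIMSEQ_I)
  fix e :: real
  assume "e > 0"
  then obtain N where N: "\<And>n x. n \<ge> N \<Longrightarrow> in_lp p x \<Longrightarrow> lp_norm p x \<le> 1 \<Longrightarrow>
      lp_norm p (mat_apply (\<lambda>i j. compress n K i j - K i j) x) \<le> e / 2"
    using compress_minus_eventually_small[OF p K, of "e / 2"] by auto
  have "norm (op_norm p (\<lambda>i j. compress n K i j - K i j) - 0) < e" if "n \<ge> N" for n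
    using op_norm_le[of p "\<lambda>i j. compress n K i j - K i j" "e / 2"] N[OF that] \<open>e > 0\<close> by auto
  then show "\<exists>N. \<forall>n\<ge>N. norm (op_norm p (\<lambda>i j. compress n K i j - K i j) - 0) < e"
    by blast
qed

lemma transpose_compress_minus:
  "transpose_mat (\<lambda>i j. compress n K i j - K i j)
    = (\<lambda>i j. compress n (transpose_mat K) i j - transpose_mat K i j)"
  by (auto simp: transpose_mat_def compress_def fun_eq_iff)

theorem mainTheorem12:
  fixes p :: real and K :: mat
  assumes "1 < p"
    and "compact_dual_op p K"
  shows "(\<lambda>n. max_norm p (\<lambda>i j. compress n K i j - K i j)) \<longlonglongrightarrow> 0"
proof -
  have "compact_op p K" and "compact_op p (transpose_mat K)"
    using assms(2) by (auto simp: compact_dual_op_def)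
  then have "(\<lambda>n. max (op_norm p (\<lambda>i j. compress n K i j - K i j))
      (op_norm p (\<lambda>i j. compress n (transpose_mat K) i j - transpose_mat K i j))) \<longlonglongrightarrow> max 0 0"
    using assms(1) by (intro tendsto_max op_norm_compress_minus_tendsto_0)
  then show ?thesis
    by (simp add: max_norm_def transpose_compress_minus)
qed

end
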